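(* In the setting described in the context, suppose that $S$ is Hilbert–Schmidt with $\|S-\hat S\|_{B_2}\le\epsilon_S$, and that $\hat P=\sum_{i,j=1}^n\theta^P_{ij}\mathring\phi_{x_i}\times\mathring\phi_{x_j}$ has coefficient matrix $\Theta_P$ satisfying $\mathrm{diag}(G_{xx^+}^\top\Theta_PG_{xx^+}-G_{xx}^\top\Theta_PG_{xx}-G_{xu}^\top\Theta_SG_{xu})\le0$ entrywise. Let $\hat v(x)=\langle\mathring\phi_x,\hat P\mathring\phi_x\rangle$ and $w(x,u)=\hat v(f(x,u))-\hat v(x)-s(h(x,u),u)$. Then $$\frac{w(x_i,u_i)}{|(x_i,u_i)|^2}\le\epsilon_S\rho(0)\quad\text{for all }i\text{ with }|(x_i,u_i)|\ne0.$$
   Context: Setting: system $x^+=f(x,u)$, $y=h(x,u)$ on bounded Lipschitz regions $\mathbb{X}\subset\mathbb{R}^{d_x}$, $\mathbb{U}\subset\mathbb{R}^{d_u}$ containing $0$, $f(0,0)=0$, $h(0,0)=0$, $f\in\mathring{C}^s(\mathbb{X}\times\mathbb{U},\mathbb{X})=\{\sum_{k=1}^{d_x+d_u}e_kf_k:f_k\in H^s(\mathbb{X}\times\mathbb{U},\mathbb{X})\}$ ($e_k(z)=z_k$, $H^s$ Sobolev) with $s\in\mathbb{N}$, $s>(d_x+d_u)/2$, and $\inf_{x,u}\lvert\mathrm{D}_xf(x,u)\rvert>0$. Kernels: $\rho:\mathbb{R}_+\to\mathbb{R}_+$ with $c_1(1+|\xi|^2)^{-s}\le|\hat\rho(\xi)|\le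 c_2(1+|\xi|^2)^{-s}$; $\mathring\kappa(x,x')=(x^\top x')\rho(|x-x'|)$, $\mathring\varkappa((x,u),(x',u'))=(x^\top x'+u^\top u')\rho(|(x,u)-(x',u')|)$, with RKHSs $\mathcal{H}_{\mathring\kappa}(\mathbb{X})$, $\mathcal{H}_{\mathring\varkappa}(\mathbb{X}\times\mathbb{U})$ and canonical features $\mathring\phi_x=\mathring\kappa(x,\cdot)$, $\mathring\varphi_{(x,u)}=\mathring\varkappa((x,u),(\cdot,\cdot))$. $S$ is a self-adjoint operator on $\mathcal{H}_{\mathring\varkappa}(\mathbb{X}\times\mathbb{U})$ with $s(h(x,u),u)=\langle\mathring\varphi_{(x,u)},S\mathring\varphi_{(x,u)}\rangle$ for all $(x,u)$. Data: $\{(x_i,u_i,x_i^+)\}_{i=1}^n$ with $x_i^+=f(x_i,u_i)$; $\hat S=\sum_{i,j=1}^n\theta^S_{ij}\mathring\varphi_{(x_i,u_i)}\times\mathring\varphi_{(x_j,u_j)}$, $\Theta_S=[\theta^S_{ij}]$; $G_{xx}=[\mathring\kappa(x_i,x_j)]$, $G_{xx^+}=[\mathring\kappa(x_i,x_j^+)]$, $G_{xu}=[\mathring\varkappa((x_i,u_i),(x_j,u_j))]$. $(g_1\times g_2)g_3=\langle g_2,g_3\rangle g_1$; $\|\cdot\|_{B_2}$ is the Hilbert–Schmidt norm. *)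

theory Defs
  imports "HOL-Analysis.Analysis"
begin

definition rank_one :: "'h::real_inner \<Rightarrow> 'h \<Rightarrow> 'h \<Rightarrow> 'h" where
  "rank_one g1 g2 = (\<lambda>g3. inner g2 g3 *\<^sub>R g1)"

definition coeff_op :: "nat \<Rightarrow> (nat \<Rightarrow> nat \<Rightarrow> real) \<Rightarrow> (nat \<Rightarrow> 'h::real_inner) \<Rightarrow> 'h \<Rightarrow> 'h" where
  "coeff_op n \<Theta> g = (\<lambda>v. \<Sum>i<n. \<Sum>j<n. \<Theta> i j *\<^sub>R rank_one (g i) (g j) v)"

definition orthonormal_set :: "'h::real_inner set \<Rightarrow> bool" where
  "orthonormal_set E \<longleftrightarrow> (\<forall>e\<in>E. norm e = 1) \<and> pairwise orthogonal E"

text \<open>Hilbert--Schmidt norm: supremum over finite orthonormal families E of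
  (sum_{e in E} |T e|^2)^(1/2); for a Hilbert--Schmidt operator this equals
  (sum over an orthonormal basis of |T e|^2)^(1/2).\<close>
definition hs_norm :: "('h::real_inner \<Rightarrow> 'h) \<Rightarrow> real" where
  "hs_norm T = Sup {sqrt (\<Sum>e\<in>E. (norm (T e))\<^sup>2) | E. finite E \<and> orthonormal_set E}"

definition hilbert_schmidt :: "('h::real_inner \<Rightarrow> 'h) \<Rightarrow> bool" where
  "hilbert_schmidt T \<longleftrightarrow> bounded_linear T \<and>
     bdd_above {sqrt (\<Sum>e\<in>E. (norm (T e))\<^sup>2) | E. finite E \<and> orthonormal_set E}"

definition self_adjoint :: "('h::real_inner \<Rightarrow> 'h) \<Rightarrow> bool" where
  "self_adjoint T \<longleftrightarrow> bounded_linear T \<and> (\<forall>a b. inner (T a) b = inner a (T b))"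

text \<open>Kernel (z^T z') rho(|z - z'|), used both for \<kappa> on X and \<varkappa> on X \<times> U
  (for pairs, inner and norm on the product type are the Euclidean ones).\<close>
definition ring_kernel :: "(real \<Rightarrow> real) \<Rightarrow> 'a::real_inner \<Rightarrow> 'a \<Rightarrow> real" where
  "ring_kernel \<rho> z z' = inner z z' * \<rho> (norm (z - z'))"

text \<open>Canonical feature map of the RKHS of kernel k on domain D, realised in a
  Hilbert space 'h: reproducing inner products and dense span.\<close>
definition is_rkhs_feature :: "('a \<Rightarrow> 'a \<Rightarrow> real) \<Rightarrow> 'a set \<Rightarrow> ('a \<Rightarrow> 'h::{real_inner,complete_space}) \<Rightarrow> bool" where
  "is_rkhs_feature k D \<phi> \<longleftrightarrow> (\<forall>z\<in>D. \<forall>z'\<in>D. inner (\<phi> z) (\<phi> z') = k z z')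
     \<and> closure (span (\<phi> ` D)) = UNIV"

definition gram :: "('a \<Rightarrow> 'a \<Rightarrow> real) \<Rightarrow> (nat \<Rightarrow> 'a) \<Rightarrow> (nat \<Rightarrow> 'a) \<Rightarrow> nat \<Rightarrow> nat \<Rightarrow> real" where
  "gram k a b i j = k (a i) (b j)"

definition quad_diag :: "nat \<Rightarrow> (nat \<Rightarrow> nat \<Rightarrow> real) \<Rightarrow> (nat \<Rightarrow> nat \<Rightarrow> real) \<Rightarrow> nat \<Rightarrow> real" where
  "quad_diag n G \<Theta> i = (\<Sum>j<n. \<Sum>k<n. G j i * \<Theta> j k * G k i)"

end

theory Submission
  imports Defs
begin

text \<open>Write z_i = (x_i, u_i) and phi_i for its feature. Evaluated at a data point, the two
  values of the estimate v and the quadratic form of the estimate of S are exactly the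
  diagonal Gram-matrix entries occurring in the LMI, while s(h(x_i,u_i),u_i) = <phi_i, S phi_i>.
  Hence the LMI gives w(x_i,u_i) <= <phi_i, (S_hat - S) phi_i> <= |S - S_hat| |phi_i|^2 with the
  operator norm, which is bounded by the Hilbert--Schmidt norm, and
  |phi_i|^2 = kappa(z_i,z_i) = |z_i|^2 rho(0). Since the Hilbert--Schmidt norm is a supremum,
  the one genuine obstacle is that S - S_hat has bounded Hilbert--Schmidt sums: S is
  Hilbert--Schmidt and S_hat has finite rank, whose sums Bessel's inequality bounds.\<close>

definition hs_sums :: "('h::real_inner \<Rightarrow> 'h) \<Rightarrow> real set" where
  "hs_sums T = {L2_set (\<lambda>e. norm (T e)) E | E. finite E \<and> orthonormal_set E}"

lemma hs_norm_eq_Sup_hs_sums: "hs_norm T = Sup (hs_sums T)"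
  by (simp add: hs_norm_def hs_sums_def L2_set_def)

lemma hilbert_schmidt_iff: "hilbert_schmidt T \<longleftrightarrow> bounded_linear T \<and> bdd_above (hs_sums T)"
  by (simp add: hilbert_schmidt_def hs_sums_def L2_set_def)

lemma bdd_above_hs_sums_iff:
  "bdd_above (hs_sums T) \<longleftrightarrow>
     (\<exists>B. \<forall>E. finite E \<longrightarrow> orthonormal_set E \<longrightarrow> L2_set (\<lambda>e. norm (T e)) E \<le> B)"
  unfolding bdd_above_def hs_sums_def by blast

lemma bessel_inequality:
  fixes b :: "'h::real_inner"
  assumes "finite E" and "orthonormal_set E"
  shows "(\<Sum>e\<in>E. (inner b e)\<^sup>2) \<le> (norm b)\<^sup>2"
proof -
  define p where "p = (\<Sum>e\<in>E. inner b e *\<^sub>R e)"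
  have inner_E: "inner e e' = (if e = e' then 1 else 0)" if "e \<in> E" "e' \<in> E" for e e'
    using assms(2) that unfolding orthonormal_set_def pairwise_def orthogonal_def
    by (auto simp: norm_eq_sqrt_inner)
  have "inner p p = (\<Sum>e\<in>E. \<Sum>e'\<in>E. inner b e * inner b e' * inner e' e)"
    unfolding p_def by (simp add: inner_sum_left inner_sum_right mult.assoc sum_distrib_left)
  also have "\<dots> = (\<Sum>e\<in>E. \<Sum>e'\<in>E. if e = e' then inner b e * inner b e' else 0)"
    by (intro sum.cong refl) (simp add: inner_E)
  also have "\<dots> = (\<Sum>e\<in>E. (inner b e)\<^sup>2)"
    using assms(1) by (simp add: sum.delta power2_eq_square)
  finally have pp: "inner p p = (\<Sum>e\<in>E. (inner b e)\<^sup>2)" .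
  have bp: "inner b p = (\<Sum>e\<in>E. (inner b e)\<^sup>2)"
    unfolding p_def by (simp add: inner_sum_right power2_eq_square)
  have "0 \<le> inner (b - p) (b - p)" by simp
  also have "\<dots> = (norm b)\<^sup>2 - 2 * inner b p + inner p p"
    by (simp add: inner_diff_left inner_diff_right inner_commute power2_norm_eq_inner)
  finally show ?thesis using pp bp by simp
qed

lemma L2_set_norm_sum_le:
  fixes F :: "'i \<Rightarrow> 'e \<Rightarrow> 'a::real_normed_vector"
  assumes "finite I"
  shows "L2_set (\<lambda>e. norm (\<Sum>i\<in>I. F i e)) E \<le> (\<Sum>i\<in>I. L2_set (\<lambda>e. norm (F i e)) E)"
  using assms
proof (induction I rule: finite_induct)
  case empty
  then show ?case by (simp add: L2_set_def)
next
  case (insert a I)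
  have "L2_set (\<lambda>e. norm (\<Sum>i\<in>insert a I. F i e)) E
      \<le> L2_set (\<lambda>e. norm (F a e) + norm (\<Sum>i\<in>I. F i e)) E"
    using insert by (intro L2_set_mono) (auto simp: norm_triangle_ineq)
  also have "\<dots> \<le> L2_set (\<lambda>e. norm (F a e)) E + L2_set (\<lambda>e. norm (\<Sum>i\<in>I. F i e)) E"
    by (rule L2_set_triangle_ineq)
  finally show ?case using insert by simp
qed

lemma L2_set_rank_one_le:
  fixes a b :: "'h::real_inner"
  assumes "finite E" and "orthonormal_set E"
  shows "L2_set (\<lambda>e. norm (c *\<^sub>R rank_one a b e)) E \<le> \<bar>c\<bar> * norm a * norm b"
proof -
  have "L2_set (\<lambda>e. \<bar>inner b e\<bar>) E \<le> norm b"
    using bessel_inequality[OF assms, of b] unfolding L2_set_def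
    by (simp add: real_le_lsqrt)
  then have "\<bar>c\<bar> * norm a * L2_set (\<lambda>e. \<bar>inner b e\<bar>) E \<le> \<bar>c\<bar> * norm a * norm b"
    by (simp add: mult_left_mono)
  then show ?thesis
    by (simp add: rank_one_def abs_mult mult_ac L2_set_right_distrib)
qed

lemma L2_set_coeff_op_le:
  assumes "finite E" and "orthonormal_set E"
  shows "L2_set (\<lambda>e. norm (coeff_op n \<Theta> g e)) E
           \<le> (\<Sum>i<n. \<Sum>j<n. \<bar>\<Theta> i j\<bar> * norm (g i) * norm (g j))"
proof -
  have "L2_set (\<lambda>e. norm (coeff_op n \<Theta> g e)) E
      \<le> (\<Sum>i<n. L2_set (\<lambda>e. norm (\<Sum>j<n. \<Theta> i j *\<^sub>R rank_one (g i) (g j) e)) E)"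
    unfolding coeff_op_def by (rule L2_set_norm_sum_le) simp
  also have "\<dots> \<le> (\<Sum>i<n. \<Sum>j<n. L2_set (\<lambda>e. norm (\<Theta> i j *\<^sub>R rank_one (g i) (g j) e)) E)"
    by (intro sum_mono L2_set_norm_sum_le) simp
  also have "\<dots> \<le> (\<Sum>i<n. \<Sum>j<n. \<bar>\<Theta> i j\<bar> * norm (g i) * norm (g j))"
    by (intro sum_mono L2_set_rank_one_le assms)
  finally show ?thesis .
qed

lemma bdd_above_hs_sums_coeff_op: "bdd_above (hs_sums (coeff_op n \<Theta> g))"
  unfolding bdd_above_hs_sums_iff using L2_set_coeff_op_le by blast

lemma bdd_above_hs_sums_diff:
  assumes "bdd_above (hs_sums S)" and "bdd_above (hs_sums R)"
  shows "bdd_above (hs_sums (\<lambda>v. S v - R v))"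
proof -
  obtain B C where
    B: "\<And>E. finite E \<Longrightarrow> orthonormal_set E \<Longrightarrow> L2_set (\<lambda>e. norm (S e)) E \<le> B" and
    C: "\<And>E. finite E \<Longrightarrow> orthonormal_set E \<Longrightarrow> L2_set (\<lambda>e. norm (R e)) E \<le> C"
    using assms unfolding bdd_above_hs_sums_iff by blast
  have "L2_set (\<lambda>e. norm (S e - R e)) E \<le> B + C" if "finite E" "orthonormal_set E" for E
  proof -
    have "L2_set (\<lambda>e. norm (S e - R e)) E \<le> L2_set (\<lambda>e. norm (S e) + norm (R e)) E"
      by (intro L2_set_mono) (auto intro: norm_triangle_ineq4)
    also have "\<dots> \<le> L2_set (\<lambda>e. norm (S e)) E + L2_set (\<lambda>e. norm (R e)) E"
      by (rule L2_set_triangle_ineq)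
    finally show ?thesis using B[OF that] C[OF that] by linarith
  qed
  then show ?thesis unfolding bdd_above_hs_sums_iff by blast
qed

lemma linear_coeff_op: "linear (coeff_op n \<Theta> g)"
  by (rule linearI)
    (simp_all add: coeff_op_def rank_one_def inner_add_right distrib_left scaleR_add_left
      sum.distrib scaleR_sum_right mult_ac)

lemma norm_le_hs_norm:
  fixes T :: "'h::real_inner \<Rightarrow> 'h"
  assumes "linear T" and "bdd_above (hs_sums T)"
  shows "norm (T v) \<le> hs_norm T * norm v"
proof (cases "v = 0")
  case True
  then show ?thesis using linear_0[OF assms(1)] by simp
next
  case False
  define e where "e = (1 / norm v) *\<^sub>R v"
  have "orthonormal_set {e}"
    using False by (simp add: orthonormal_set_def e_def)
  then have "L2_set (\<lambda>e. norm (T e)) {e} \<in> hs_sums T"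
    unfolding hs_sums_def by blast
  then have "norm (T e) \<le> hs_norm T"
    unfolding hs_norm_eq_Sup_hs_sums using cSup_upper[OF _ assms(2)] by simp
  moreover have "T v = norm v *\<^sub>R T e"
    using False linear_cmul[OF assms(1)] by (simp add: e_def)
  ultimately show ?thesis
    by (metis mult.commute mult_left_mono norm_ge_zero norm_scaleR abs_norm_cancel)
qed

lemma abs_inner_le_hs_norm:
  fixes T :: "'h::real_inner \<Rightarrow> 'h"
  assumes "linear T" and "bdd_above (hs_sums T)"
  shows "\<bar>inner v (T v)\<bar> \<le> hs_norm T * (norm v)\<^sup>2"
proof -
  have "\<bar>inner v (T v)\<bar> \<le> norm v * norm (T v)"
    by (rule Cauchy_Schwarz_ineq2)
  also have "\<dots> \<le> norm v * (hs_norm T * norm v)"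
    by (intro mult_left_mono norm_le_hs_norm assms norm_ge_zero)
  finally show ?thesis
    by (simp add: power2_eq_square mult_ac)
qed

lemma abs_inner_diff_coeff_op_le_hs_norm:
  assumes "hilbert_schmidt S"
  shows "\<bar>inner v (S v - coeff_op n \<Theta> g v)\<bar>
           \<le> hs_norm (\<lambda>v. S v - coeff_op n \<Theta> g v) * (norm v)\<^sup>2"
  using assms unfolding hilbert_schmidt_iff
  by (intro abs_inner_le_hs_norm)
    (auto intro: linear_compose_sub bounded_linear.linear linear_coeff_op
      bdd_above_hs_sums_diff bdd_above_hs_sums_coeff_op)

lemma inner_coeff_op:
  "inner v (coeff_op n \<Theta> g v) = (\<Sum>j<n. \<Sum>k<n. inner (g j) v * \<Theta> j k * inner (g k) v)"
  unfolding coeff_op_def rank_one_def by (simp add: inner_sum_right inner_commute mult_ac)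

lemma inner_coeff_op_eq_quad_diag:
  assumes "\<And>j. j < n \<Longrightarrow> inner (\<phi> (a j)) (\<phi> (b i)) = k (a j) (b i)"
  shows "inner (\<phi> (b i)) (coeff_op n \<Theta> (\<lambda>j. \<phi> (a j)) (\<phi> (b i))) = quad_diag n (gram k a b) \<Theta> i"
  unfolding inner_coeff_op quad_diag_def gram_def by (simp add: assms)

lemma is_rkhs_feature_inner:
  "is_rkhs_feature k D \<phi> \<Longrightarrow> z \<in> D \<Longrightarrow> z' \<in> D \<Longrightarrow> inner (\<phi> z) (\<phi> z') = k z z'"
  unfolding is_rkhs_feature_def by blast

lemma norm_ring_kernel_feature:
  "is_rkhs_feature (ring_kernel \<rho>) D \<phi> \<Longrightarrow> z \<in> D \<Longrightarrow> (norm (\<phi> z))\<^sup>2 = (norm z)\<^sup>2 * \<rho> 0"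
  using is_rkhs_feature_inner[of _ D \<phi> z z] by (simp add: power2_norm_eq_inner ring_kernel_def)

theorem corollary4:
  fixes X :: "'x::euclidean_space set" and U :: "'u::euclidean_space set"
    and f :: "'x \<Rightarrow> 'u \<Rightarrow> 'x" and h :: "'x \<Rightarrow> 'u \<Rightarrow> 'y::euclidean_space"
    and s :: "'y \<Rightarrow> 'u \<Rightarrow> real"
    and \<rho> :: "real \<Rightarrow> real"
    and \<phi> :: "'x \<Rightarrow> 'hx::{real_inner,complete_space}"
    and \<phi>xu :: "'x \<times> 'u \<Rightarrow> 'hxu::{real_inner,complete_space}"
    and S :: "'hxu \<Rightarrow> 'hxu"
    and n :: nat and xs :: "nat \<Rightarrow> 'x" and us :: "nat \<Rightarrow> 'u" and xps :: "nat \<Rightarrow> 'x"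
    and \<Theta>S \<Theta>P :: "nat \<Rightarrow> nat \<Rightarrow> real" and \<epsilon>S :: real
  assumes X: "open X" "bounded X" "0 \<in> X"
    and U: "open U" "bounded U" "0 \<in> U"
    and f_maps: "\<forall>x\<in>X. \<forall>u\<in>U. f x u \<in> X"
    and f0: "f 0 0 = 0" and h0: "h 0 0 = 0"
    and rho_nonneg: "\<forall>r\<ge>0. \<rho> r \<ge> 0"
    and feat_x: "is_rkhs_feature (ring_kernel \<rho>) X \<phi>"
    and feat_xu: "is_rkhs_feature (ring_kernel \<rho>) (X \<times> U) \<phi>xu"
    and S_sa: "self_adjoint S"
    and S_s: "\<forall>x\<in>X. \<forall>u\<in>U. s (h x u) u = inner (\<phi>xu (x, u)) (S (\<phi>xu (x, u)))"
    and S_hs: "hilbert_schmidt S"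
    and data: "\<forall>i<n. xs i \<in> X \<and> us i \<in> U \<and> xps i = f (xs i) (us i)"
    and S_err: "hs_norm (\<lambda>g. S g - coeff_op n \<Theta>S (\<lambda>i. \<phi>xu (xs i, us i)) g) \<le> \<epsilon>S"
    and LMI: "\<forall>i<n. quad_diag n (gram (ring_kernel \<rho>) xs xps) \<Theta>P i
                  - quad_diag n (gram (ring_kernel \<rho>) xs xs) \<Theta>P i
                  - quad_diag n (gram (ring_kernel \<rho>) (\<lambda>i. (xs i, us i)) (\<lambda>i. (xs i, us i))) \<Theta>S i \<le> 0"
  shows "let vhat = (\<lambda>x. inner (\<phi> x) (coeff_op n \<Theta>P (\<lambda>i. \<phi> (xs i)) (\<phi> x)));
             w = (\<lambda>x u. vhat (f x u) - vhat x - s (h x u) u)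
         in \<forall>i<n. norm (xs i, us i) \<noteq> 0 \<longrightarrow>
              w (xs i) (us i) / (norm (xs i, us i))\<^sup>2 \<le> \<epsilon>S * \<rho> 0"
  unfolding Let_def
proof (intro allI impI)
  fix i assume i: "i < n" and nonzero: "norm (xs i, us i) \<noteq> 0"
  define z where "z j = (xs j, us j)" for j
  define g where "g j = \<phi>xu (z j)" for j
  have z_in: "z j \<in> X \<times> U" if "j < n" for j
    using data that by (simp add: z_def)
  have xps_i: "f (xs i) (us i) = xps i" "xps i \<in> X"
    using data f_maps i by auto
  have vhat_xps: "inner (\<phi> (xps i)) (coeff_op n \<Theta>P (\<lambda>j. \<phi> (xs j)) (\<phi> (xps i)))
      = quad_diag n (gram (ring_kernel \<rho>) xs xps) \<Theta>P i"
    using data xps_i by (intro inner_coeff_op_eq_quad_diag is_rkhs_feature_inner[OF feat_x]) auto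
  have vhat_xs: "inner (\<phi> (xs i)) (coeff_op n \<Theta>P (\<lambda>j. \<phi> (xs j)) (\<phi> (xs i)))
      = quad_diag n (gram (ring_kernel \<rho>) xs xs) \<Theta>P i"
    using data i by (intro inner_coeff_op_eq_quad_diag is_rkhs_feature_inner[OF feat_x]) auto
  have S_hat: "inner (g i) (coeff_op n \<Theta>S g (g i)) = quad_diag n (gram (ring_kernel \<rho>) z z) \<Theta>S i"
    unfolding g_def using z_in i by (intro inner_coeff_op_eq_quad_diag is_rkhs_feature_inner[OF feat_xu])
  have s_i: "s (h (xs i) (us i)) (us i) = inner (g i) (S (g i))"
    using S_s data i by (simp add: g_def z_def)
  have "inner (\<phi> (f (xs i) (us i))) (coeff_op n \<Theta>P (\<lambda>j. \<phi> (xs j)) (\<phi> (f (xs i) (us i))))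
      - inner (\<phi> (xs i)) (coeff_op n \<Theta>P (\<lambda>j. \<phi> (xs j)) (\<phi> (xs i))) - s (h (xs i) (us i)) (us i)
      \<le> - inner (g i) (S (g i) - coeff_op n \<Theta>S g (g i))" (is "?w \<le> _")
    using LMI i unfolding xps_i vhat_xps vhat_xs s_i
    by (simp add: inner_diff_right S_hat z_def[abs_def])
  also have "\<dots> \<le> hs_norm (\<lambda>v. S v - coeff_op n \<Theta>S g v) * (norm (g i))\<^sup>2"
    using abs_inner_diff_coeff_op_le_hs_norm[OF S_hs, of "g i" n \<Theta>S g] by linarith
  also have "\<dots> \<le> \<epsilon>S * (norm (g i))\<^sup>2"
    using S_err by (intro mult_right_mono) (simp_all add: g_def[abs_def] z_def)
  also have "\<dots> = \<epsilon>S * \<rho> 0 * (norm (xs i, us i))\<^sup>2"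
    using norm_ring_kernel_feature[OF feat_xu z_in[OF i]] by (simp add: g_def z_def)
  finally have "?w \<le> \<epsilon>S * \<rho> 0 * (norm (xs i, us i))\<^sup>2" .
  moreover have "0 < (norm (xs i, us i))\<^sup>2"
    using nonzero by simp
  ultimately show "?w / (norm (xs i, us i))\<^sup>2 \<le> \<epsilon>S * \<rho> 0"
    by (simp only: pos_divide_le_eq)
qed

end
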